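(* Let $\mathcal{H}$ be a complex separable Hilbert space and let $A = A^*$ be a bounded injective operator on $\mathcal{H}$ which is Hankel with respect to a pure isometry $V$ of multiplicity $N$, and suppose $AV > 0$. Let $A = J|A|$ be the polar decomposition of $A$, where $|A| = \sqrt{A^*A}$ and $J$ is a self-adjoint unitary. Then $|A| > 0$ is $W$-Hankel and doubly-positive, where $W = JV$. Moreover, if $W = W_0 \oplus U$ is the Wold decomposition of $W$ on $\mathcal{H} = \mathcal{H}_0 \oplus \mathcal{H}'$, with $W_0$ a pure isometry on $\mathcal{H}_0$ and $U$ unitary on $\mathcal{H}'$, then $W_0$ has multiplicity $N$, both $\mathcal{H}_0$ and $\mathcal{H}'$ are invariant under $|A|$, and either $U = I_{\mathcal{H}'}$ or $\mathcal{H}' = \{0\}$.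
   Context: For an isometry $V$, a bounded operator $A$ is $V$-Hankel if $V^*A = AV$; a positive semi-definite $A$ is $V$-Hankel and doubly-positive if it is $V$-Hankel and $AV = V^*A$ is positive semi-definite. For an operator $T$, $T>0$ means $T$ is positive semi-definite and injective. An isometry is pure if it is unitarily equivalent to the unilateral shift $M_z$ on $H^2\otimes\mathbb{C}^n$ for some $n \in \mathbb{N}\cup\{+\infty\}$; its multiplicity is $n = \dim(\mathrm{Ran}\, V)^\perp$. The Wold decomposition writes any isometry as an orthogonal direct sum of a pure isometry and a unitary. *)

theory Defs
  imports "HOL-Analysis.Analysis" "HOL-Library.Extended_Nat"
begin

class chilbert = real_normed_vector + complete_space +
  fixes scaleC :: "complex \<Rightarrow> 'a \<Rightarrow> 'a"
    and cinner :: "'a \<Rightarrow> 'a \<Rightarrow> complex"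
  assumes scaleC_add_right: "scaleC a (x + y) = scaleC a x + scaleC a y"
    and scaleC_add_left: "scaleC (a + b) x = scaleC a x + scaleC b x"
    and scaleC_scaleC: "scaleC a (scaleC b x) = scaleC (a * b) x"
    and scaleC_one: "scaleC 1 x = x"
    and scaleC_of_real: "scaleC (complex_of_real r) x = scaleR r x"
    and cinner_add_right: "cinner x (y + z) = cinner x y + cinner x z"
    and cinner_scaleC_right: "cinner x (scaleC a y) = a * cinner x y"
    and cinner_commute: "cinner y x = cnj (cinner x y)"
    and cinner_self: "cinner x x = complex_of_real ((norm x)\<^sup>2)"

definition separable_space :: "'a::chilbert itself \<Rightarrow> bool" where
  "separable_space _ \<longleftrightarrow> (\<exists>D::'a set. countable D \<and> closure D = UNIV)"

definition bop :: "('a::chilbert \<Rightarrow> 'a) \<Rightarrow> bool" where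
  "bop T \<longleftrightarrow> (\<forall>x y. T (x + y) = T x + T y) \<and> (\<forall>c x. T (scaleC c x) = scaleC c (T x))
      \<and> (\<exists>K. \<forall>x. norm (T x) \<le> K * norm x)"

definition adj :: "('a::chilbert \<Rightarrow> 'a) \<Rightarrow> ('a \<Rightarrow> 'a)" where
  "adj T = (SOME S. \<forall>x y. cinner (T x) y = cinner x (S y))"

definition psd :: "('a::chilbert \<Rightarrow> 'a) \<Rightarrow> bool" where
  "psd T \<longleftrightarrow> bop T \<and> (\<forall>x. Im (cinner x (T x)) = 0 \<and> 0 \<le> Re (cinner x (T x)))"

text \<open>T > 0: positive semi-definite and injective.\<close>
definition strictly_pos :: "('a::chilbert \<Rightarrow> 'a) \<Rightarrow> bool" where
  "strictly_pos T \<longleftrightarrow> psd T \<and> inj T"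

definition isometry :: "('a::chilbert \<Rightarrow> 'a) \<Rightarrow> bool" where
  "isometry V \<longleftrightarrow> bop V \<and> (\<forall>x. norm (V x) = norm x)"

definition unitary_op :: "('a::chilbert \<Rightarrow> 'a) \<Rightarrow> bool" where
  "unitary_op U \<longleftrightarrow> isometry U \<and> surj U"

definition hankel :: "('a::chilbert \<Rightarrow> 'a) \<Rightarrow> ('a \<Rightarrow> 'a) \<Rightarrow> bool" where
  "hankel V A \<longleftrightarrow> bop A \<and> adj V \<circ> A = A \<circ> V"

definition hankel_doubly_pos :: "('a::chilbert \<Rightarrow> 'a) \<Rightarrow> ('a \<Rightarrow> 'a) \<Rightarrow> bool" where
  "hankel_doubly_pos V A \<longleftrightarrow> psd A \<and> hankel V A \<and> psd (A \<circ> V)"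

text \<open>H^2 (x) C^n is modelled by its coefficient space: square-summable arrays
f k j (k = Taylor index, j < n the C^n-coordinate), n possibly infinite.
M_z shifts the Taylor index.\<close>

definition ell2n :: "enat \<Rightarrow> (nat \<Rightarrow> nat \<Rightarrow> complex) set" where
  "ell2n n = {f. (\<forall>k j. n \<le> enat j \<longrightarrow> f k j = 0) \<and>
                 (\<lambda>(k, j). (cmod (f k j))\<^sup>2) summable_on UNIV}"

definition shift_Mz :: "(nat \<Rightarrow> nat \<Rightarrow> complex) \<Rightarrow> (nat \<Rightarrow> nat \<Rightarrow> complex)" where
  "shift_Mz f = (\<lambda>k j. if k = 0 then 0 else f (k - 1) j)"

text \<open>The restriction of W to the (invariant) set H0 is a pure isometry of
multiplicity n: it is unitarily equivalent to M_z on H^2 (x) C^n.\<close>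
definition pure_on :: "'a::chilbert set \<Rightarrow> ('a \<Rightarrow> 'a) \<Rightarrow> enat \<Rightarrow> bool" where
  "pure_on H0 W n \<longleftrightarrow> (\<forall>x\<in>H0. W x \<in> H0) \<and>
     (\<exists>U. bij_betw U H0 (ell2n n) \<and>
          (\<forall>x\<in>H0. \<forall>y\<in>H0. U (x + y) = (\<lambda>k j. U x k j + U y k j)) \<and>
          (\<forall>c. \<forall>x\<in>H0. U (scaleC c x) = (\<lambda>k j. c * U x k j)) \<and>
          (\<forall>x\<in>H0. (norm x)\<^sup>2 = (\<Sum>\<^sub>\<infinity>(k, j)\<in>UNIV. (cmod (U x k j))\<^sup>2)) \<and>
          (\<forall>x\<in>H0. U (W x) = shift_Mz (U x)))"

definition pure_isometry :: "('a::chilbert \<Rightarrow> 'a) \<Rightarrow> enat \<Rightarrow> bool" where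
  "pure_isometry V n \<longleftrightarrow> isometry V \<and> pure_on UNIV V n"

definition closed_csubspace :: "'a::chilbert set \<Rightarrow> bool" where
  "closed_csubspace S \<longleftrightarrow> 0 \<in> S \<and> (\<forall>x\<in>S. \<forall>y\<in>S. x + y \<in> S) \<and>
     (\<forall>c. \<forall>x\<in>S. scaleC c x \<in> S) \<and> closed S"

definition wold_decomp :: "('a::chilbert \<Rightarrow> 'a) \<Rightarrow> 'a set \<Rightarrow> 'a set \<Rightarrow> bool" where
  "wold_decomp W H0 H1 \<longleftrightarrow> closed_csubspace H0 \<and> closed_csubspace H1 \<and>
     (\<forall>x\<in>H0. \<forall>y\<in>H1. cinner x y = 0) \<and> (\<forall>z. \<exists>x\<in>H0. \<exists>y\<in>H1. z = x + y) \<and>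
     (\<exists>m. pure_on H0 W m) \<and> (\<forall>x\<in>H1. W x \<in> H1) \<and> W ` H1 = H1"

end

theory Submission
  imports Defs
begin

(*
  A = A\<^sup>* = J P with P \<ge> 0 forces J P = P J, so P W = J P V = A V \<ge> 0 and
  W\<^sup>* P = V\<^sup>* J P = V\<^sup>* A = A V = P W: P is W-Hankel and doubly positive (W = J V).

  For a W-Hankel P \<ge> 0 the numbers c\<^sub>n = <P W\<^sup>n x, W\<^sup>n x> satisfy
  c\<^sub>n\<^sub>+\<^sub>1 = <P W\<^sup>n x, W\<^sup>n\<^sup>+\<^sup>2 x>, so by Cauchy-Schwarz they form a bounded log-convex
  sequence, which must be non-increasing. On the unitary part H' the same applies to W\<^sup>-\<^sup>1,
  so c\<^sub>n is constant there; this forces W\<^sup>2 = I on H', and positivity of P W on the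
  (-1)-eigenvector x - W x then gives W = I on H'. Consequently the H\<^sub>0-component of
  P y (y \<in> H') is a fixed vector of the pure part, hence 0, so P H' \<subseteq> H', and P = P\<^sup>*
  gives P H\<^sub>0 \<subseteq> H\<^sub>0.

  The multiplicity of a pure isometry is the dimension of its wandering subspace,
  measured by the number of linearly independent wandering vectors. The involution J maps
  the wandering subspace (ran V)\<^sup>\<bottom> of V onto H\<^sub>0 \<ominus> W H\<^sub>0, because W H' = H'.
*)

lemma cinner_add_left: "cinner (x + y) z = cinner x z + cinner (y::'a::chilbert) z"
  by (metis cinner_commute cinner_add_right complex_cnj_add)

lemma cinner_scaleC_left: "cinner (scaleC a x) (y::'a::chilbert) = cnj a * cinner x y"
  by (metis cinner_commute cinner_scaleC_right complex_cnj_mult complex_cnj_cnj)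

lemma cinner_zero_right [simp]: "cinner (x::'a::chilbert) 0 = 0"
  using cinner_add_right[of x 0 0] by simp

lemma cinner_zero_left [simp]: "cinner 0 (x::'a::chilbert) = 0"
  using cinner_add_left[of 0 0 x] by simp

lemma scaleC_zero_right [simp]: "scaleC c (0::'a::chilbert) = 0"
  using scaleC_add_right[of c 0 0] by simp

lemma scaleC_zero_left [simp]: "scaleC 0 (x::'a::chilbert) = 0"
  using scaleC_of_real[of 0 x] by simp

lemma scaleC_minus_one: "scaleC (-1) (x::'a::chilbert) = - x"
  using scaleC_of_real[of "-1" x] by simp

lemma cinner_minus_right: "cinner x (- y) = - cinner x (y::'a::chilbert)"
  using cinner_add_right[of x y "-y"] by (simp add: eq_neg_iff_add_eq_0 add.commute)

lemma cinner_minus_left: "cinner (- x) y = - cinner x (y::'a::chilbert)"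
  using cinner_add_left[of x "-x" y] by (simp add: eq_neg_iff_add_eq_0 add.commute)

lemma cinner_diff_right: "cinner x (y - z) = cinner x y - cinner x (z::'a::chilbert)"
  unfolding diff_conv_add_uminus by (simp only: cinner_add_right cinner_minus_right)

lemma cinner_diff_left: "cinner (x - y) z = cinner x z - cinner y (z::'a::chilbert)"
  unfolding diff_conv_add_uminus by (simp only: cinner_add_left cinner_minus_left)

lemma cinner_self_eq_0 [simp]: "cinner x x = 0 \<longleftrightarrow> (x::'a::chilbert) = 0"
  by (simp add: cinner_self)

lemma cinner_eqI_left: "(\<And>y. cinner x y = cinner z y) \<Longrightarrow> x = (z::'a::chilbert)"
  by (metis cinner_diff_left cinner_self_eq_0 diff_eq_diff_eq diff_self)

lemma cinner_eqI_right: "(\<And>y. cinner y x = cinner y z) \<Longrightarrow> x = (z::'a::chilbert)"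
  by (metis cinner_diff_right cinner_self_eq_0 diff_eq_diff_eq diff_self)

lemma norm_scaleC: "norm (scaleC c (x::'a::chilbert)) = cmod c * norm x"
proof -
  have "complex_of_real ((norm (scaleC c x))\<^sup>2) = cinner (scaleC c x) (scaleC c x)"
    by (rule cinner_self[symmetric])
  also have "\<dots> = cnj c * c * cinner x x"
    by (simp add: cinner_scaleC_left cinner_scaleC_right)
  also have "\<dots> = complex_of_real ((cmod c * norm x)\<^sup>2)"
    by (simp only: cinner_self power_mult_distrib of_real_mult complex_norm_square mult.commute)
  finally have "(norm (scaleC c x))\<^sup>2 = (cmod c * norm x)\<^sup>2"
    using of_real_eq_iff by blast
  then show ?thesis
    by (simp add: power2_eq_iff_nonneg)
qed

lemma norm_add_square: "(norm (x + y))\<^sup>2 = (norm x)\<^sup>2 + (norm (y::'a::chilbert))\<^sup>2 + 2 * Re (cinner x y)"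
proof -
  have "complex_of_real ((norm (x + y))\<^sup>2) = cinner (x + y) (x + y)"
    by (rule cinner_self[symmetric])
  also have "\<dots> = cinner x x + cinner y y + cinner x y + cnj (cinner x y)"
    by (simp add: cinner_add_left cinner_add_right cinner_commute[of x y])
  finally have "(norm (x + y))\<^sup>2 = Re (cinner x x + cinner y y + cinner x y + cnj (cinner x y))"
    by (metis Re_complex_of_real)
  then show ?thesis
    by (simp add: cinner_self)
qed

lemma norm_diff_square: "(norm (x - y))\<^sup>2 = (norm x)\<^sup>2 + (norm (y::'a::chilbert))\<^sup>2 - 2 * Re (cinner x y)"
  using norm_add_square[of x "-y"] by (simp add: cinner_minus_right)

lemma eq_of_cinner_eq_norm_square:
  assumes "norm x = norm (y::'a::chilbert)" and "cinner x y = complex_of_real ((norm y)\<^sup>2)"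
  shows "x = y"
  using norm_diff_square[of x y] assms by simp

lemma quadratic_nonneg_imp_le_mult:
  fixes a q c :: real
  assumes nonneg: "\<And>t. 0 \<le> a - 2 * t * q + t\<^sup>2 * q * c" and "0 \<le> c"
  shows "q \<le> a * c"
proof (cases "c = 0")
  case True
  show ?thesis
  proof (rule ccontr)
    assume "\<not> ?thesis"
    then have "q > 0"
      using True by simp
    have "0 \<le> a - 2 * ((a + 1) / (2 * q)) * q"
      using nonneg[of "(a + 1) / (2 * q)"] True by simp
    also have "\<dots> = -1"
      using \<open>q > 0\<close> by (simp add: field_simps)
    finally show False
      by simp
  qed
next
  case False
  then have "c > 0"
    using \<open>0 \<le> c\<close> by simp
  have "0 \<le> a - 2 * (1 / c) * q + (1 / c)\<^sup>2 * q * c"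
    by (rule nonneg)
  also have "\<dots> = a - q / c"
    using \<open>c > 0\<close> by (simp add: field_simps power2_eq_square)
  finally show ?thesis
    using \<open>c > 0\<close> by (simp add: field_simps)
qed

lemma sesquilinear_cauchy_schwarz:
  fixes b :: "'a::chilbert \<Rightarrow> 'a \<Rightarrow> complex"
  assumes add: "\<And>x y z. b x (y + z) = b x y + b x z"
    and scale: "\<And>x y c. b x (scaleC c y) = c * b x y"
    and herm: "\<And>x y. b y x = cnj (b x y)"
    and pos: "\<And>x. Im (b x x) = 0 \<and> 0 \<le> Re (b x x)"
  shows "(cmod (b x y))\<^sup>2 \<le> Re (b x x) * Re (b y y)"
proof -
  have add_left: "b (x + y) z = b x z + b y z" for x y z
    by (metis add herm complex_cnj_add)
  have scale_left: "b (scaleC c x) y = cnj c * b x y" for x y c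
    by (metis scale herm complex_cnj_mult complex_cnj_cnj)
  define w where "w = b x y"
  have "0 \<le> Re (b x x) - 2 * t * (cmod w)\<^sup>2 + t\<^sup>2 * (cmod w)\<^sup>2 * Re (b y y)" for t :: real
  proof -
    define s where "s = - (complex_of_real t * cnj w)"
    have "b (x + scaleC s y) (x + scaleC s y) = b x x + s * w + cnj s * cnj w + cnj s * s * b y y"
      by (simp add: add add_left scale scale_left w_def herm[of x y] algebra_simps)
    also have "\<dots> = b x x - 2 * complex_of_real t * (w * cnj w)
        + (complex_of_real t)\<^sup>2 * (w * cnj w) * b y y"
      by (simp add: s_def algebra_simps power2_eq_square)
    finally have "Re (b (x + scaleC s y) (x + scaleC s y))
        = Re (b x x) - 2 * t * (cmod w)\<^sup>2 + t\<^sup>2 * (cmod w)\<^sup>2 * Re (b y y)"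
      by (simp add: complex_norm_square[symmetric] power2_eq_square)
    then show ?thesis
      using pos by metis
  qed
  then show ?thesis
    unfolding w_def[symmetric] by (rule quadratic_nonneg_imp_le_mult) (use pos in auto)
qed

lemma cinner_cauchy_schwarz: "cmod (cinner x y) \<le> norm x * norm (y::'a::chilbert)"
proof -
  have "(cmod (cinner x y))\<^sup>2 \<le> Re (cinner x x) * Re (cinner y y)"
    by (rule sesquilinear_cauchy_schwarz)
      (auto simp: cinner_add_right cinner_scaleC_right cinner_self intro: cinner_commute)
  also have "\<dots> = (norm x * norm y)\<^sup>2"
    by (simp add: cinner_self power_mult_distrib)
  finally show ?thesis
    by (simp add: power2_le_iff_abs_le)
qed

section \<open>Riesz representation\<close>

lemma parallelogram_midpoint:
  "(norm (a - b))\<^sup>2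
     = 2 * (norm (x - a))\<^sup>2 + 2 * (norm (x - b))\<^sup>2 - 4 * (norm (x - scaleR (1/2) (a + b)))\<^sup>2"
  for a b x :: "'a::chilbert"
proof -
  have "(x - a) + (x - b) = scaleR 2 (x - scaleR (1/2) (a + b))"
    by (simp add: algebra_simps scaleR_2)
  then have "(norm ((x - a) + (x - b)))\<^sup>2 = 4 * (norm (x - scaleR (1/2) (a + b)))\<^sup>2"
    by (simp add: power_mult_distrib)
  moreover have "(x - a) - (x - b) = b - a"
    by simp
  ultimately show ?thesis
    using norm_add_square[of "x - a" "x - b"] norm_diff_square[of "x - a" "x - b"]
    by (simp add: norm_minus_commute)
qed

lemma minimizing_sequence_Cauchy:
  fixes K :: "'a::chilbert set"
  assumes "convex K" and ks: "\<And>n. ks n \<in> K"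
    and d_le: "\<And>w. w \<in> K \<Longrightarrow> d \<le> (norm (x - w))\<^sup>2"
    and near: "\<And>n. (norm (x - ks n))\<^sup>2 \<le> d + e n" and "e \<longlonglongrightarrow> 0"
  shows "Cauchy ks"
proof (rule metric_CauchyI)
  fix \<epsilon> :: real
  assume "0 < \<epsilon>"
  then obtain M where M: "\<And>n. n \<ge> M \<Longrightarrow> norm (e n) < \<epsilon>\<^sup>2 / 4"
    using LIMSEQ_D[OF \<open>e \<longlonglongrightarrow> 0\<close>, of "\<epsilon>\<^sup>2 / 4"] by auto
  have "dist (ks m) (ks n) < \<epsilon>" if "m \<ge> M" "n \<ge> M" for m n
  proof -
    have "scaleR (1/2) (ks m + ks n) \<in> K"
      using convexD[OF \<open>convex K\<close> ks ks, of "1/2" "1/2"] by (simp add: scaleR_right_distrib)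
    then have "(norm (ks m - ks n))\<^sup>2 \<le> 2 * e m + 2 * e n"
      using parallelogram_midpoint[of "ks m" "ks n" x] d_le near[of m] near[of n] by force
    also have "\<dots> < \<epsilon>\<^sup>2"
      using M[OF \<open>m \<ge> M\<close>] M[OF \<open>n \<ge> M\<close>] by simp
    finally show ?thesis
      using \<open>0 < \<epsilon>\<close> by (simp add: dist_norm power_less_imp_less_base)
  qed
  then show "\<exists>M. \<forall>m\<ge>M. \<forall>n\<ge>M. dist (ks m) (ks n) < \<epsilon>"
    by blast
qed

lemma nearest_point_exists:
  fixes K :: "'a::chilbert set"
  assumes "closed K" "convex K" "K \<noteq> {}"
  obtains k where "k \<in> K" "\<And>w. w \<in> K \<Longrightarrow> norm (x - k) \<le> norm (x - w)"
proof -
  define d where "d = Inf ((\<lambda>w. (norm (x - w))\<^sup>2) ` K)"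
  have d_le: "d \<le> (norm (x - w))\<^sup>2" if "w \<in> K" for w
    unfolding d_def by (rule cInf_lower) (use that in \<open>auto intro: bdd_belowI[of _ 0]\<close>)
  have "\<exists>k\<in>K. (norm (x - k))\<^sup>2 < d + 1 / Suc n" for n
    using cInf_lessD[of "(\<lambda>w. (norm (x - w))\<^sup>2) ` K" "d + 1 / Suc n"] \<open>K \<noteq> {}\<close>
    by (auto simp: d_def)
  then obtain ks where ks: "\<And>n. ks n \<in> K" "\<And>n. (norm (x - ks n))\<^sup>2 < d + 1 / Suc n"
    by metis
  have vanish: "(\<lambda>n. 1 / real (Suc n)) \<longlonglongrightarrow> 0"
    using LIMSEQ_inverse_real_of_nat by (simp add: inverse_eq_divide)
  have "Cauchy ks"
    by (rule minimizing_sequence_Cauchy[OF \<open>convex K\<close> ks(1) d_le less_imp_le[OF ks(2)] vanish])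
  then obtain k where lim: "ks \<longlonglongrightarrow> k"
    using Cauchy_convergent_iff convergent_def by blast
  have "k \<in> K"
    using \<open>closed K\<close> ks(1) lim closed_sequentially by blast
  have "(\<lambda>n. (norm (x - ks n))\<^sup>2) \<longlonglongrightarrow> (norm (x - k))\<^sup>2"
    by (intro tendsto_intros lim)
  moreover have "(\<lambda>n. d + 1 / Suc n) \<longlonglongrightarrow> d"
    using tendsto_add[OF tendsto_const vanish, of d] by simp
  ultimately have "(norm (x - k))\<^sup>2 \<le> d"
    using ks(2) by (intro LIMSEQ_le) (auto intro: less_imp_le)
  then have "norm (x - k) \<le> norm (x - w)" if "w \<in> K" for w
    using d_le[OF that] by (simp add: power2_le_imp_le)
  then show ?thesis
    using \<open>k \<in> K\<close> that by blast
qed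

lemma nearest_point_orthogonal:
  fixes x k w :: "'a::chilbert"
  assumes nearest: "\<And>u. u \<in> K \<Longrightarrow> norm (x - k) \<le> norm (x - u)"
    and line: "\<And>c. k + scaleC c w \<in> K"
  shows "cinner (x - k) w = 0"
proof -
  define q where "q = cinner (x - k) w"
  have "0 \<le> 0 - 2 * t * (cmod q)\<^sup>2 + t\<^sup>2 * (cmod q)\<^sup>2 * (norm w)\<^sup>2" for t :: real
  proof -
    define c where "c = complex_of_real t * cnj q"
    have "cinner (x - k) (scaleC c w) = complex_of_real t * (q * cnj q)"
      by (simp add: c_def cinner_scaleC_right q_def[symmetric] ac_simps)
    also have "\<dots> = complex_of_real (t * (cmod q)\<^sup>2)"
      by (simp only: complex_norm_square of_real_mult)
    finally have "Re (cinner (x - k) (scaleC c w)) = t * (cmod q)\<^sup>2"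
      by (simp only: Re_complex_of_real)
    moreover have "(norm (scaleC c w))\<^sup>2 = t\<^sup>2 * (cmod q)\<^sup>2 * (norm w)\<^sup>2"
      by (simp add: norm_scaleC c_def norm_mult power_mult_distrib)
    moreover have "(norm (x - k))\<^sup>2 \<le> (norm ((x - k) - scaleC c w))\<^sup>2"
      using nearest[OF line[of c]] by (intro power_mono) (simp_all add: algebra_simps)
    ultimately show ?thesis
      using norm_diff_square[of "x - k" "scaleC c w"] by linarith
  qed
  then have "(cmod q)\<^sup>2 \<le> 0 * (norm w)\<^sup>2"
    by (intro quadratic_nonneg_imp_le_mult) auto
  then show ?thesis
    by (simp add: q_def)
qed

lemma bounded_functional_kernel:
  fixes f :: "'a::chilbert \<Rightarrow> complex"
  assumes add: "\<And>x y. f (x + y) = f x + f y" and scale: "\<And>c x. f (scaleC c x) = c * f x"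
    and bounded: "\<And>x. cmod (f x) \<le> K * norm x"
  shows "closed {x. f x = 0}" and "convex {x. f x = 0}"
proof -
  have diff: "f (x - y) = f x - f y" for x y
    using add[of x "-y"] scale[of "-1" y] by (simp add: scaleC_minus_one)
  have "(max K 0)-lipschitz_on UNIV f"
  proof (rule lipschitz_onI)
    show "dist (f x) (f y) \<le> max K 0 * dist x y" for x y
      using bounded[of "x - y"] by (simp add: dist_norm diff) (smt (verit) mult_right_mono norm_ge_zero)
  qed simp
  then show "closed {x. f x = 0}"
    by (intro closed_Collect_eq lipschitz_on_continuous_on continuous_on_const)
  show "convex {x. f x = 0}"
    by (rule convexI) (simp add: add scale scaleC_of_real[symmetric])
qed

lemma riesz_representation:
  fixes f :: "'a::chilbert \<Rightarrow> complex"
  assumes add: "\<And>x y. f (x + y) = f x + f y" and scale: "\<And>c x. f (scaleC c x) = c * f x"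
    and bounded: "\<And>x. cmod (f x) \<le> K * norm x"
  obtains y where "\<And>x. f x = cinner y x"
proof (cases "\<forall>x. f x = 0")
  case True
  then show ?thesis
    using that[of 0] by simp
next
  case False
  then obtain x1 where "f x1 \<noteq> 0"
    by blast
  have diff: "f (x - y) = f x - f y" for x y
    using add[of x "-y"] scale[of "-1" y] by (simp add: scaleC_minus_one)
  note kernel = bounded_functional_kernel[OF add scale bounded]
  obtain k where "f k = 0" and nearest: "\<And>u. f u = 0 \<Longrightarrow> norm (x1 - k) \<le> norm (x1 - u)"
    using nearest_point_exists[OF kernel, of x1] add[of 0 0] by auto
  define z where "z = x1 - k"
  have "f z \<noteq> 0"
    using \<open>f x1 \<noteq> 0\<close> \<open>f k = 0\<close> by (simp add: z_def diff)
  have "cinner z x = f x / f z * cinner z z" for x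
  proof -
    have "cinner z (x - scaleC (f x / f z) z) = 0"
      unfolding z_def
      by (rule nearest_point_orthogonal[of "{u. f u = 0}"])
        (use nearest in \<open>auto simp: \<open>f k = 0\<close> add scale diff z_def[symmetric] \<open>f z \<noteq> 0\<close>\<close>)
    then show ?thesis
      by (simp add: cinner_diff_right cinner_scaleC_right)
  qed
  moreover have "z \<noteq> 0"
    using \<open>f z \<noteq> 0\<close> scale[of 0 0] by auto
  moreover have "cnj (cinner z z) = cinner z z"
    by (simp add: cinner_self)
  ultimately have "f x = cinner (scaleC (cnj (f z) / cinner z z) z) x" for x
    using \<open>f z \<noteq> 0\<close> by (simp add: cinner_scaleC_left z_def[symmetric] field_simps)
  then show ?thesis
    using that by blast
qed

lemma bop_add: "bop T \<Longrightarrow> T (x + y) = T x + T y"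
  by (simp add: bop_def)

lemma bop_scaleC: "bop T \<Longrightarrow> T (scaleC c x) = scaleC c (T x)"
  by (simp add: bop_def)

lemma bop_zero: "bop T \<Longrightarrow> T 0 = (0::'a::chilbert)"
  using bop_scaleC[of T 0 0] by simp

lemma bop_minus: "bop T \<Longrightarrow> T (- x) = - T (x::'a::chilbert)"
  using bop_scaleC[of T "-1" x] by (simp add: scaleC_minus_one)

lemma bop_diff: "bop T \<Longrightarrow> T (x - y) = T x - T (y::'a::chilbert)"
  using bop_add[of T x "-y"] bop_minus[of T y] by simp

lemma bop_sum:
  fixes k :: nat
  assumes "bop T"
  shows "T (\<Sum>i<k. scaleC (c i) (x i)) = (\<Sum>i<k. scaleC (c i) (T (x i :: 'a::chilbert)))"
  by (induction k) (simp_all add: bop_zero[OF assms] bop_add[OF assms] bop_scaleC[OF assms])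

lemma bop_bounded: "bop T \<Longrightarrow> \<exists>K\<ge>0. \<forall>x. norm (T x) \<le> K * norm (x::'a::chilbert)"
  unfolding bop_def by (meson max.cobounded2 dual_order.trans max.cobounded1 mult_right_mono norm_ge_zero)

lemma bop_comp:
  assumes S: "bop S" and T: "bop T"
  shows "bop (S \<circ> (T::'a::chilbert \<Rightarrow> 'a))"
proof -
  obtain K1 K2 where "K1 \<ge> 0" "K2 \<ge> 0"
    and K1: "\<And>x. norm (S x) \<le> K1 * norm x" and K2: "\<And>x. norm (T x) \<le> K2 * norm x"
    using bop_bounded[OF S] bop_bounded[OF T] by blast
  have "norm (S (T x)) \<le> (K1 * K2) * norm x" for x
    using order_trans[OF K1 mult_left_mono[OF K2 \<open>K1 \<ge> 0\<close>]] by (simp add: mult.assoc)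
  then show ?thesis
    using S T by (auto simp: bop_def)
qed

lemma adj_exists:
  assumes T: "bop T"
  shows "\<exists>S. \<forall>x y. cinner (T x) y = cinner x (S y)"
proof -
  obtain K where K: "\<And>x. norm (T x) \<le> K * norm x"
    using bop_bounded[OF T] by blast
  have "\<exists>s. \<forall>x. cinner y (T x) = cinner s x" for y
  proof -
    have "cmod (cinner y (T x)) \<le> (norm y * K) * norm x" for x
      using order_trans[OF cinner_cauchy_schwarz mult_left_mono[OF K norm_ge_zero]]
      by (simp add: mult.assoc)
    then obtain s where "\<And>x. cinner y (T x) = cinner s x"
      by (rule riesz_representation[rotated 2])
        (simp_all add: bop_add[OF T] bop_scaleC[OF T] cinner_add_right cinner_scaleC_right)
    then show ?thesis
      by blast
  qed
  then obtain S where "\<And>y x. cinner y (T x) = cinner (S y) x"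
    by metis
  then show ?thesis
    by (metis cinner_commute)
qed

lemma cinner_adj_right: "bop T \<Longrightarrow> cinner (T x) y = cinner x (adj T y)"
  unfolding adj_def using someI_ex[OF adj_exists] by blast

lemma adj_eqI:
  assumes "bop T" and "\<And>x y. cinner (T x) y = cinner x (S y)"
  shows "adj T = S"
  by (rule ext, rule cinner_eqI_right) (metis assms cinner_adj_right)

lemma self_adjoint_cinner: "bop T \<Longrightarrow> adj T = T \<Longrightarrow> cinner (T x) y = cinner x (T y)"
  by (metis cinner_adj_right)

lemma self_adjoint_isometry_involution:
  assumes "isometry J" and "adj J = J"
  shows "J (J x) = x"
proof (rule eq_of_cinner_eq_norm_square)
  show "norm (J (J x)) = norm x"
    using assms(1) by (simp add: isometry_def)
  show "cinner (J (J x)) x = complex_of_real ((norm x)\<^sup>2)"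
    using assms by (simp add: isometry_def self_adjoint_cinner cinner_self)
qed

lemma isometry_inj: "isometry W \<Longrightarrow> inj W"
proof (rule injI)
  fix a b
  assume "isometry W" "W a = W b"
  then have "norm (a - b) = norm (W (a - b))"
    by (simp add: isometry_def)
  also have "\<dots> = 0"
    using \<open>isometry W\<close> \<open>W a = W b\<close> by (simp add: isometry_def bop_diff)
  finally show "a = b"
    by simp
qed

lemma isometry_comp: "isometry S \<Longrightarrow> isometry T \<Longrightarrow> isometry (S \<circ> (T::'a::chilbert \<Rightarrow> 'a))"
  by (simp add: isometry_def bop_comp)

lemma psd_cinner_commute:
  assumes "psd P"
  shows "cinner (P x) y = cinner x (P (y::'a::chilbert))"
proof -
  have P: "bop P" and real: "\<And>u. Im (cinner u (P u)) = 0"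
    using assms by (auto simp: psd_def)
  define a where "a = cinner x (P y)"
  define b where "b = cinner y (P x)"
  \<comment> \<open>polarization: the quadratic forms at \<open>x + y\<close> and \<open>x + \<i> y\<close> are real\<close>
  have "cinner (x + y) (P (x + y)) = cinner x (P x) + a + b + cinner y (P y)"
    by (simp add: bop_add[OF P] cinner_add_left cinner_add_right a_def b_def)
  then have "Im (a + b) = 0"
    using real[of "x + y"] real[of x] real[of y] by simp
  moreover have "cinner (x + scaleC \<i> y) (P (x + scaleC \<i> y))
      = cinner x (P x) + \<i> * a - \<i> * b + cinner y (P y)"
    by (simp add: bop_add[OF P] bop_scaleC[OF P] cinner_add_left cinner_add_right
        cinner_scaleC_left cinner_scaleC_right a_def b_def algebra_simps)
  then have "Re (a - b) = 0"
    using real[of "x + scaleC \<i> y"] real[of x] real[of y] by simp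
  ultimately have "cnj b = a"
    by (intro complex_eqI) auto
  then show ?thesis
    by (metis cinner_commute a_def b_def)
qed

lemma psd_cauchy_schwarz:
  assumes "psd P"
  shows "(cmod (cinner (P x) y))\<^sup>2 \<le> Re (cinner (P x) x) * Re (cinner (P y) (y::'a::chilbert))"
proof (rule sesquilinear_cauchy_schwarz[where b = "\<lambda>x y. cinner (P x) y"])
  show "cinner (P y) x = cnj (cinner (P x) y)" for x y
    by (metis assms cinner_commute psd_cinner_commute)
qed (use assms in \<open>auto simp: cinner_add_right cinner_scaleC_right psd_def psd_cinner_commute\<close>)

lemma psd_form_real: "psd P \<Longrightarrow> cinner (P x) x = complex_of_real (Re (cinner (P x) x))"
  by (simp add: complex_eq_iff psd_def psd_cinner_commute)

lemma psd_form_eq_0_imp_eq_0: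
  assumes "psd P" "inj P" and "Re (cinner (P x) x) = 0"
  shows "x = 0"
proof -
  have "cinner (P x) y = 0" for y
    using psd_cauchy_schwarz[OF \<open>psd P\<close>, of x y] assms(3) by simp
  then have "P x = P 0"
    using bop_zero[of P] \<open>psd P\<close> by (metis cinner_eqI_left cinner_zero_left psd_def)
  then show ?thesis
    using \<open>inj P\<close> by (simp add: inj_eq)
qed

lemma polar_factors_commute:
  assumes "bop A" "adj A = A" "psd P" "bop J" "adj J = J" and polar: "A = J \<circ> P"
  shows "J (P x) = P (J x)"
proof (rule cinner_eqI_right)
  fix y
  have "cinner y (J (P x)) = cinner (A y) x"
    using self_adjoint_cinner[OF assms(1,2), of y x] polar by simp
  also have "\<dots> = cinner (P y) (J x)"
    using self_adjoint_cinner[OF assms(4,5), of "P y" x] polar by simp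
  also have "\<dots> = cinner y (P (J x))"
    using psd_cinner_commute[OF assms(3)] by simp
  finally show "cinner y (J (P x)) = cinner y (P (J x))" .
qed

lemma polar_factor_hankel_doubly_pos:
  assumes "bop A" "adj A = A" "psd P" "bop J" "adj J = J" and polar: "A = J \<circ> P"
    and "bop V" and "hankel V A" and "psd (A \<circ> V)"
  shows "hankel_doubly_pos (J \<circ> V) P"
proof -
  have JP: "J (P x) = P (J x)" for x
    by (rule polar_factors_commute[OF assms(1-6)])
  have PW: "P \<circ> (J \<circ> V) = A \<circ> V"
    using polar by (simp add: fun_eq_iff JP)
  have "adj (J \<circ> V) = adj V \<circ> J"
    by (rule adj_eqI) (simp_all add: bop_comp assms(4,5,7) self_adjoint_cinner cinner_adj_right)
  then have "adj (J \<circ> V) \<circ> P = adj V \<circ> A"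
    using polar by (simp add: comp_assoc)
  also have "\<dots> = P \<circ> (J \<circ> V)"
    using \<open>hankel V A\<close> PW by (simp add: hankel_def)
  finally show ?thesis
    using \<open>psd P\<close> \<open>psd (A \<circ> V)\<close> PW by (simp add: hankel_doubly_pos_def hankel_def psd_def)
qed

section \<open>Doubly positive Hankel operators on the unitary part\<close>

lemma hankel_cinner:
  assumes "hankel W P" "bop W"
  shows "cinner (P (W x)) y = cinner (P x) (W y)"
proof -
  have "P (W x) = adj W (P x)"
    using assms(1) by (metis comp_apply hankel_def)
  then show ?thesis
    by (metis assms(2) cinner_adj_right cinner_commute)
qed

lemma log_convex_geometric_lower_bound:
  fixes c :: "nat \<Rightarrow> real"
  assumes nonneg: "\<And>n. 0 \<le> c n" and log_convex: "\<And>n. (c (Suc n))\<^sup>2 \<le> c n * c (Suc (Suc n))"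
    and "0 < c 0"
  shows "(c 1 / c 0) ^ n * c 0 \<le> c n"
proof -
  define r where "r = c 1 / c 0"
  have "r \<ge> 0"
    using nonneg[of 1] \<open>0 < c 0\<close> by (simp add: r_def)
  have ratio: "r * c n \<le> c (Suc n)" for n
  proof (induction n)
    case 0
    then show ?case
      using \<open>0 < c 0\<close> by (simp add: r_def)
  next
    case (Suc n)
    show ?case
    proof (cases "c n = 0")
      case True
      then have "c (Suc n) = 0"
        using log_convex[of n] by simp
      then show ?thesis
        using nonneg by simp
    next
      case False
      have "c n * (r * c (Suc n)) \<le> c (Suc n) * c (Suc n)"
        using mult_right_mono[OF Suc.IH nonneg[of "Suc n"]] by (simp add: ac_simps)
      also have "\<dots> \<le> c n * c (Suc (Suc n))"
        using log_convex[of n] by (simp add: power2_eq_square)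
      finally show ?thesis
        using False nonneg[of n] by (simp add: mult_le_cancel_left)
    qed
  qed
  show ?thesis
    unfolding r_def[symmetric]
    by (induction n) (auto intro: order_trans[OF mult_left_mono ratio] simp: \<open>r \<ge> 0\<close> mult.assoc)
qed

lemma bounded_log_convex_decseq:
  fixes c :: "nat \<Rightarrow> real"
  assumes nonneg: "\<And>n. 0 \<le> c n" and log_convex: "\<And>n. (c (Suc n))\<^sup>2 \<le> c n * c (Suc (Suc n))"
    and bounded: "\<And>n. c n \<le> M"
  shows "decseq c"
proof (rule decseq_SucI, rule ccontr)
  fix n
  assume "\<not> c (Suc n) \<le> c n"
  define d where "d k = c (n + k)" for k
  have "d 0 < d 1"
    using \<open>\<not> c (Suc n) \<le> c n\<close> by (simp add: d_def)
  moreover have "0 < d 0"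
  proof (rule ccontr)
    assume "\<not> 0 < d 0"
    then have "d 0 = 0"
      using nonneg[of n] by (simp add: d_def)
    then have "(d 1)\<^sup>2 \<le> 0"
      using log_convex[of n] by (simp add: d_def)
    then show False
      using \<open>d 0 < d 1\<close> \<open>d 0 = 0\<close> by simp
  qed
  ultimately obtain k where "M / d 0 < (d 1 / d 0) ^ k"
    using real_arch_pow[of "d 1 / d 0" "M / d 0"] by (auto simp: field_simps)
  then have "M < (d 1 / d 0) ^ k * d 0"
    using \<open>0 < d 0\<close> by (simp add: field_simps)
  also have "\<dots> \<le> d k"
    by (rule log_convex_geometric_lower_bound) (use nonneg log_convex \<open>0 < d 0\<close> in \<open>simp_all add: d_def\<close>)
  finally show False
    using bounded[of "n + k"] by (simp add: d_def)
qed

lemma psd_orbit_decseq: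
  assumes "psd P"
    and shift: "\<And>n. cinner (P (u (Suc n))) (u (Suc n)) = cinner (P (u n)) (u (Suc (Suc n)))"
    and bounded: "\<And>n. norm (u n) \<le> R"
  shows "decseq (\<lambda>n. Re (cinner (P (u n)) (u n)))"
proof -
  obtain K where "K \<ge> 0" and K: "\<And>x. norm (P x) \<le> K * norm x"
    using bop_bounded \<open>psd P\<close> psd_def by blast
  have form_bound: "Re (cinner (P x) x) \<le> K * R\<^sup>2" if "norm x \<le> R" for x
  proof -
    have "Re (cinner (P x) x) \<le> norm (P x) * norm x"
      by (rule order_trans[OF complex_Re_le_cmod cinner_cauchy_schwarz])
    also have "\<dots> \<le> (K * norm x) * norm x"
      using K by (simp add: mult_right_mono)
    also have "\<dots> \<le> K * R\<^sup>2"
      using mult_left_mono[OF power_mono[OF that norm_ge_zero, of 2] \<open>K \<ge> 0\<close>]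
      by (simp add: power2_eq_square mult.assoc)
    finally show ?thesis .
  qed
  show ?thesis
  proof (rule bounded_log_convex_decseq)
    show "0 \<le> Re (cinner (P (u n)) (u n))" for n
      using \<open>psd P\<close> by (simp add: psd_def psd_cinner_commute)
    show "Re (cinner (P (u n)) (u n)) \<le> K * R\<^sup>2" for n
      using form_bound bounded by blast
    show "(Re (cinner (P (u (Suc n))) (u (Suc n))))\<^sup>2
        \<le> Re (cinner (P (u n)) (u n)) * Re (cinner (P (u (Suc (Suc n)))) (u (Suc (Suc n))))" for n
    proof -
      let ?c = "cinner (P (u (Suc n))) (u (Suc n))"
      have "cmod ?c = \<bar>Re ?c\<bar>"
        by (metis psd_form_real[OF \<open>psd P\<close>] norm_of_real)
      then have "(Re ?c)\<^sup>2 = (cmod (cinner (P (u n)) (u (Suc (Suc n)))))\<^sup>2"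
        by (simp add: shift)
      then show ?thesis
        using psd_cauchy_schwarz[OF \<open>psd P\<close>] by simp
    qed
  qed
qed

lemma hankel_form_antitone:
  assumes "hankel W P" "psd P" "isometry W"
  shows "Re (cinner (P (W x)) (W x)) \<le> Re (cinner (P x) x)"
proof -
  have "bop W"
    using \<open>isometry W\<close> by (simp add: isometry_def)
  have "decseq (\<lambda>n. Re (cinner (P ((W ^^ n) x)) ((W ^^ n) x)))"
  proof (rule psd_orbit_decseq[OF \<open>psd P\<close>])
    show "cinner (P ((W ^^ Suc n) x)) ((W ^^ Suc n) x) = cinner (P ((W ^^ n) x)) ((W ^^ Suc (Suc n)) x)" for n
      using hankel_cinner[OF \<open>hankel W P\<close> \<open>bop W\<close>] by simp
    show "norm ((W ^^ n) x) \<le> norm x" for n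
      using \<open>isometry W\<close> by (induction n) (simp_all add: isometry_def)
  qed
  from decseq_SucD[OF this, of 0] show ?thesis
    by simp
qed

lemma hankel_form_invariant_on_unitary_part:
  assumes "hankel W P" "psd P" "isometry W" and onto: "W ` H = H" and "x \<in> H"
  shows "Re (cinner (P (W x)) (W x)) = Re (cinner (P x) x)"
proof -
  have "bop W"
    using \<open>isometry W\<close> by (simp add: isometry_def)
  \<comment> \<open>the backward orbit of \<open>W x\<close> under \<open>(W|H)\<^sup>-\<^sup>1\<close> gives the reverse inequality\<close>
  define g where "g = inv_into H W"
  have g_in: "g y \<in> H" and W_g: "W (g y) = y" if "y \<in> H" for y
  proof -
    have "y \<in> W ` H"
      using that onto by simp
    then show "g y \<in> H" "W (g y) = y"
      unfolding g_def by (simp_all add: inv_into_into f_inv_into_f)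
  qed
  have norm_g: "norm (g y) = norm y" if "y \<in> H" for y
  proof -
    have "norm (W (g y)) = norm (g y)"
      using \<open>isometry W\<close> by (simp add: isometry_def)
    then show ?thesis
      using W_g[OF that] by simp
  qed
  have orbit_in: "(g ^^ n) (W x) \<in> H" for n
    using \<open>x \<in> H\<close> onto g_in by (induction n) auto
  have dec: "decseq (\<lambda>n. Re (cinner (P ((g ^^ n) (W x))) ((g ^^ n) (W x))))"
  proof (rule psd_orbit_decseq[OF \<open>psd P\<close>])
    fix n
    let ?y = "(g ^^ n) (W x)"
    show "cinner (P ((g ^^ Suc n) (W x))) ((g ^^ Suc n) (W x))
        = cinner (P ?y) ((g ^^ Suc (Suc n)) (W x))"
      using hankel_cinner[OF \<open>hankel W P\<close> \<open>bop W\<close>, of "g ?y" "g (g ?y)"]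
        W_g[OF orbit_in[of n]] W_g[OF orbit_in[of "Suc n"]] by simp
    show "norm ?y \<le> norm (W x)"
      by (induction n) (use norm_g orbit_in in auto)
  qed
  have "g (W x) = x"
    using \<open>x \<in> H\<close> isometry_inj[OF \<open>isometry W\<close>] by (simp add: g_def inj_on_def inv_into_f_f)
  with decseq_SucD[OF dec, of 0] have "Re (cinner (P x) x) \<le> Re (cinner (P (W x)) (W x))"
    by simp
  then show ?thesis
    using hankel_form_antitone[OF assms(1-3), of x] by linarith
qed

lemma psd_form_diff:
  assumes "psd P"
  shows "Re (cinner (P (a - b)) (a - b))
    = Re (cinner (P a) a) + Re (cinner (P b) b) - 2 * Re (cinner (P a) b)"
proof -
  have "bop P"
    using assms by (simp add: psd_def)
  have "cinner (P b) a = cnj (cinner (P a) b)"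
    by (metis assms cinner_commute psd_cinner_commute)
  then show ?thesis
    by (simp add: bop_diff[OF \<open>bop P\<close>] cinner_diff_left cinner_diff_right)
qed

lemma hankel_unitary_part_involution:
  assumes "hankel W P" "psd P" "inj P" "isometry W" and onto: "W ` H = H" and "x \<in> H"
  shows "W (W x) = x"
proof -
  have "bop W"
    using \<open>isometry W\<close> by (simp add: isometry_def)
  have "W x \<in> H"
    using \<open>x \<in> H\<close> onto by blast
  note invariant = hankel_form_invariant_on_unitary_part[OF \<open>hankel W P\<close> \<open>psd P\<close> \<open>isometry W\<close> onto]
  have q1: "Re (cinner (P (W x)) (W x)) = Re (cinner (P x) x)"
    using invariant[OF \<open>x \<in> H\<close>] .
  have q2: "Re (cinner (P (W (W x))) (W (W x))) = Re (cinner (P x) x)"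
    using invariant[OF \<open>W x \<in> H\<close>] q1 by simp
  have mixed: "Re (cinner (P x) (W (W x))) = Re (cinner (P x) x)"
    using q1 hankel_cinner[OF \<open>hankel W P\<close> \<open>bop W\<close>, of x "W x"] by simp
  have "Re (cinner (P (x - W (W x))) (x - W (W x))) = 0"
    by (simp add: psd_form_diff[OF \<open>psd P\<close>] q2 mixed)
  from psd_form_eq_0_imp_eq_0[OF \<open>psd P\<close> \<open>inj P\<close> this] show ?thesis
    by simp
qed

lemma hankel_doubly_pos_fixes_unitary_part:
  assumes "hankel_doubly_pos W P" "inj P" "isometry W" and "W ` H = H" and "x \<in> H"
  shows "W x = x"
proof -
  have "psd P" "hankel W P" "psd (P \<circ> W)" "bop W"
    using assms(1,3) by (simp_all add: hankel_doubly_pos_def isometry_def)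
  define u where "u = x - W x"
  \<comment> \<open>\<open>W\<close> acts as \<open>-1\<close> on \<open>u\<close>, so the positivity of \<open>P W\<close> and of \<open>P\<close> force \<open>u = 0\<close>\<close>
  have "W u = - u"
    using hankel_unitary_part_involution[OF \<open>hankel W P\<close> \<open>psd P\<close> assms(2-5)]
    by (simp add: u_def bop_diff[OF \<open>bop W\<close>])
  moreover have "0 \<le> Re (cinner u (P (W u)))"
    using \<open>psd (P \<circ> W)\<close> by (simp add: psd_def)
  ultimately have "0 \<le> - Re (cinner (P u) u)"
    using \<open>psd P\<close> by (simp add: psd_def bop_minus cinner_minus_right psd_cinner_commute)
  moreover have "0 \<le> Re (cinner (P u) u)"
    using \<open>psd P\<close> by (simp add: psd_def psd_cinner_commute)
  ultimately have "u = 0"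
    using psd_form_eq_0_imp_eq_0[OF \<open>psd P\<close> \<open>inj P\<close>, of u] by simp
  then show ?thesis
    by (simp add: u_def)
qed

section \<open>The wandering subspace of the model shift\<close>

definition ell2_sq :: "(nat \<Rightarrow> nat \<Rightarrow> complex) \<Rightarrow> nat \<times> nat \<Rightarrow> real" where
  "ell2_sq f = (\<lambda>(k, j). (cmod (f k j))\<^sup>2)"

definition ell2_norm2 :: "(nat \<Rightarrow> nat \<Rightarrow> complex) \<Rightarrow> real" where
  "ell2_norm2 f = infsum (ell2_sq f) UNIV"

definition shift_wandering :: "enat \<Rightarrow> (nat \<Rightarrow> nat \<Rightarrow> complex) set" where
  "shift_wandering n = {f \<in> ell2n n. \<forall>k j. k \<noteq> 0 \<longrightarrow> f k j = 0}"

lemma ell2n_summable: "f \<in> ell2n n \<Longrightarrow> ell2_sq f summable_on UNIV"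
  by (simp add: ell2n_def ell2_sq_def)

lemma infsum_single_support:
  fixes d :: "nat \<times> nat \<Rightarrow> real"
  assumes "\<And>p. p \<noteq> p0 \<Longrightarrow> d p = 0"
  shows "d summable_on UNIV" and "infsum d UNIV = d p0"
proof -
  have "d summable_on UNIV \<longleftrightarrow> d summable_on {p0}"
    by (rule summable_on_cong_neutral) (use assms in auto)
  then show "d summable_on UNIV"
    by simp
  have "infsum d UNIV = infsum d {p0}"
    by (rule infsum_cong_neutral) (use assms in auto)
  then show "infsum d UNIV = d p0"
    by simp
qed

lemma ell2_shift_Mz:
  assumes "ell2_sq g summable_on UNIV"
  shows "ell2_sq (shift_Mz g) summable_on UNIV" and "ell2_norm2 (shift_Mz g) = ell2_norm2 g"
proof -
  define h where "h = (\<lambda>(k::nat, j::nat). (Suc k, j))"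
  have "inj h"
    by (auto simp: h_def inj_on_def)
  have reindex: "ell2_sq (shift_Mz g) \<circ> h = ell2_sq g"
    by (auto simp: ell2_sq_def shift_Mz_def h_def)
  have outside: "ell2_sq (shift_Mz g) p = 0" if "p \<notin> range h" for p
  proof -
    obtain a b where p: "p = (a, b)"
      by fastforce
    have "a = 0"
    proof (rule ccontr)
      assume "a \<noteq> 0"
      then have "p = h (a - 1, b)"
        by (simp add: h_def p)
      then show False
        using that by blast
    qed
    then show ?thesis
      by (simp add: p ell2_sq_def shift_Mz_def)
  qed
  have "ell2_sq (shift_Mz g) summable_on UNIV \<longleftrightarrow> ell2_sq (shift_Mz g) summable_on range h"
    by (rule summable_on_cong_neutral) (use outside in auto)
  then show "ell2_sq (shift_Mz g) summable_on UNIV"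
    using summable_on_reindex[OF \<open>inj h\<close>, of "ell2_sq (shift_Mz g)"] reindex assms by simp
  have "infsum (ell2_sq (shift_Mz g)) UNIV = infsum (ell2_sq (shift_Mz g)) (range h)"
    by (rule infsum_cong_neutral) (use outside in auto)
  then show "ell2_norm2 (shift_Mz g) = ell2_norm2 g"
    using infsum_reindex[OF \<open>inj h\<close>, of "ell2_sq (shift_Mz g)"] reindex by (simp add: ell2_norm2_def)
qed

lemma ell2_norm2_update:
  assumes "ell2_sq f summable_on UNIV"
  shows "ell2_norm2 (\<lambda>a b. if a = k \<and> b = j then v else f a b)
    = ell2_norm2 f + (cmod v)\<^sup>2 - (cmod (f k j))\<^sup>2"
proof -
  define d where "d p = (if p = (k, j) then (cmod v)\<^sup>2 - (cmod (f k j))\<^sup>2 else 0)" for p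
  have "ell2_sq (\<lambda>a b. if a = k \<and> b = j then v else f a b) = (\<lambda>p. ell2_sq f p + d p)"
    by (auto simp: ell2_sq_def d_def fun_eq_iff)
  moreover have "d summable_on UNIV" "infsum d UNIV = (cmod v)\<^sup>2 - (cmod (f k j))\<^sup>2"
    using infsum_single_support[of "(k, j)" d] by (auto simp: d_def)
  ultimately show ?thesis
    unfolding ell2_norm2_def using infsum_add[OF assms] by simp
qed

lemma shift_wandering_pythagoras:
  assumes "f \<in> shift_wandering n" and "g \<in> ell2n n"
  shows "ell2_norm2 (\<lambda>k j. f k j + c * shift_Mz g k j)
    = ell2_norm2 f + (cmod c)\<^sup>2 * ell2_norm2 (shift_Mz g)"
proof -
  have "f \<in> ell2n n"
    using assms(1) by (simp add: shift_wandering_def)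
  note summable = ell2_shift_Mz(1)[OF ell2n_summable[OF \<open>g \<in> ell2n n\<close>]]
  have "ell2_sq (\<lambda>k j. f k j + c * shift_Mz g k j)
      = (\<lambda>p. ell2_sq f p + (cmod c)\<^sup>2 * ell2_sq (shift_Mz g) p)"
    using assms(1)
    by (auto simp: ell2_sq_def shift_Mz_def shift_wandering_def fun_eq_iff norm_mult power_mult_distrib)
  then show ?thesis
    unfolding ell2_norm2_def
    by (simp add: infsum_add[OF ell2n_summable[OF \<open>f \<in> ell2n n\<close>] summable_on_cmult_right[OF summable]]
        infsum_cmult_right[OF summable])
qed

lemma pythagoras_imp_shift_wandering:
  assumes f: "f \<in> ell2n n"
    and pyth: "\<And>g c. g \<in> ell2n n \<Longrightarrow> ell2_norm2 (\<lambda>k j. f k j + c * shift_Mz g k j)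
      = ell2_norm2 f + (cmod c)\<^sup>2 * ell2_norm2 (shift_Mz g)"
  shows "f \<in> shift_wandering n"
proof -
  have "f k j = 0" if "k \<noteq> 0" for k j
  proof (cases "n \<le> enat j")
    case True
    then show ?thesis
      using f by (simp add: ell2n_def)
  next
    case False
    \<comment> \<open>test against the unit array at \<open>(k - 1, j)\<close>, whose shift is the unit array at \<open>(k, j)\<close>\<close>
    define e where "e a b = (if a = k - 1 \<and> b = j then 1 else (0::complex))" for a b
    have "ell2_sq e summable_on UNIV"
      by (rule infsum_single_support(1)[of "(k - 1, j)"]) (auto simp: ell2_sq_def e_def split: if_splits)
    then have "e \<in> ell2n n"
      using False by (auto simp: ell2n_def e_def ell2_sq_def)
    have shift_e: "shift_Mz e = (\<lambda>a b. if a = k \<and> b = j then 1 else 0)"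
      using that by (auto simp: shift_Mz_def e_def fun_eq_iff)
    have norm_e: "ell2_norm2 (shift_Mz e) = 1"
      unfolding shift_e ell2_norm2_def
      by (subst infsum_single_support(2)[of "(k, j)"]) (auto simp: ell2_sq_def split: if_splits)
    have "ell2_norm2 f + (cmod (2 * f k j))\<^sup>2 - (cmod (f k j))\<^sup>2
        = ell2_norm2 (\<lambda>a b. if a = k \<and> b = j then 2 * f k j else f a b)"
      using ell2_norm2_update[OF ell2n_summable[OF f], of k j "2 * f k j"] by (rule sym)
    also have "(\<lambda>a b. if a = k \<and> b = j then 2 * f k j else f a b)
        = (\<lambda>a b. f a b + f k j * shift_Mz e a b)"
      by (auto simp: shift_e fun_eq_iff)
    also have "ell2_norm2 \<dots> = ell2_norm2 f + (cmod (f k j))\<^sup>2"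
      using pyth[OF \<open>e \<in> ell2n n\<close>] by (simp only: norm_e mult_1_right)
    finally have "(cmod (2 * f k j))\<^sup>2 - (cmod (f k j))\<^sup>2 = (cmod (f k j))\<^sup>2"
      by linarith
    moreover have "(cmod (2 * f k j))\<^sup>2 = 4 * (cmod (f k j))\<^sup>2"
      by (simp add: norm_mult power_mult_distrib)
    ultimately show ?thesis
      by simp
  qed
  then show ?thesis
    using f by (simp add: shift_wandering_def)
qed

lemma shift_wandering_iff_pythagoras:
  assumes "f \<in> ell2n n"
  shows "f \<in> shift_wandering n \<longleftrightarrow>
    (\<forall>g\<in>ell2n n. \<forall>c. ell2_norm2 (\<lambda>k j. f k j + c * shift_Mz g k j)
                      = ell2_norm2 f + (cmod c)\<^sup>2 * ell2_norm2 (shift_Mz g))"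
  using shift_wandering_pythagoras pythagoras_imp_shift_wandering[OF assms] by blast

definition array_independent :: "nat \<Rightarrow> (nat \<Rightarrow> nat \<Rightarrow> nat \<Rightarrow> complex) \<Rightarrow> bool" where
  "array_independent k f \<longleftrightarrow> (\<forall>c. (\<forall>a b. (\<Sum>i<k. c i * f i a b) = 0) \<longrightarrow> (\<forall>i<k. c i = 0))"

lemma sum_pivot_elimination:
  fixes v :: "'i \<Rightarrow> nat \<Rightarrow> 'a::field"
  assumes "finite I" "i0 \<in> I"
  shows "(\<Sum>i\<in>I. (if i = i0 then - (\<Sum>l\<in>I - {i0}. d l * v l m) else v i0 m * d i) * v i j)
    = (\<Sum>i\<in>I - {i0}. d i * (v i0 m * v i j - v i m * v i0 j))"
proof -
  have "(\<Sum>i\<in>I. (if i = i0 then - (\<Sum>l\<in>I - {i0}. d l * v l m) else v i0 m * d i) * v i j)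
      = - (\<Sum>i\<in>I - {i0}. d i * v i m * v i0 j) + (\<Sum>i\<in>I - {i0}. v i0 m * d i * v i j)"
    using assms by (simp add: sum.remove sum_distrib_right)
  also have "\<dots> = (\<Sum>i\<in>I - {i0}. v i0 m * d i * v i j - d i * v i m * v i0 j)"
    by (simp add: sum_subtractf)
  also have "\<dots> = (\<Sum>i\<in>I - {i0}. d i * (v i0 m * v i j - v i m * v i0 j))"
    by (rule sum.cong) (simp_all add: algebra_simps)
  finally show ?thesis .
qed

lemma homogeneous_system_nontrivial_solution:
  fixes v :: "'i \<Rightarrow> nat \<Rightarrow> 'a::field"
  assumes "finite I" and "m < card I"
  shows "\<exists>c. (\<exists>i\<in>I. c i \<noteq> 0) \<and> (\<forall>j<m. (\<Sum>i\<in>I. c i * v i j) = 0)"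
  using assms
proof (induction m arbitrary: I v)
  case 0
  then obtain i where "i \<in> I"
    by fastforce
  then show ?case
    by (intro exI[of _ "\<lambda>_. 1"]) auto
next
  case (Suc m)
  show ?case
  proof (cases "\<exists>i0\<in>I. v i0 m \<noteq> 0")
    case False
    obtain c where "\<exists>i\<in>I. c i \<noteq> 0" and c: "\<forall>j<m. (\<Sum>i\<in>I. c i * v i j) = 0"
      using Suc.IH[of I v] Suc.prems by force
    moreover have "(\<Sum>i\<in>I. c i * v i m) = 0"
      using False by simp
    ultimately show ?thesis
      by (metis less_Suc_eq)
  next
    case True
    then obtain i0 where "i0 \<in> I" and "v i0 m \<noteq> 0"
      by blast
    define I' where "I' = I - {i0}"
    \<comment> \<open>Gaussian elimination of the unknown \<open>i0\<close> using equation \<open>m\<close>\<close>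
    define w where "w i j = v i0 m * v i j - v i m * v i0 j" for i j
    have "finite I'" "m < card I'"
      using Suc.prems \<open>i0 \<in> I\<close> by (auto simp: I'_def)
    then obtain c' where "\<exists>i\<in>I'. c' i \<noteq> 0" and c': "\<forall>j<m. (\<Sum>i\<in>I'. c' i * w i j) = 0"
      using Suc.IH[of I' w] by blast
    define c where "c i = (if i = i0 then - (\<Sum>l\<in>I'. c' l * v l m) else v i0 m * c' i)" for i
    have reduce: "(\<Sum>i\<in>I. c i * v i j) = (\<Sum>i\<in>I'. c' i * w i j)" for j
      unfolding c_def w_def I'_def by (rule sum_pivot_elimination[OF Suc.prems(1) \<open>i0 \<in> I\<close>])
    have "w i m = 0" for i
      by (simp add: w_def)
    then have "\<forall>j<Suc m. (\<Sum>i\<in>I. c i * v i j) = 0"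
      using c' by (simp add: reduce less_Suc_eq)
    moreover have "\<exists>i\<in>I. c i \<noteq> 0"
      using \<open>\<exists>i\<in>I'. c' i \<noteq> 0\<close> \<open>v i0 m \<noteq> 0\<close> by (auto simp: I'_def c_def)
    ultimately show ?thesis
      by blast
  qed
qed

lemma cinner_eq_0_iff_pythagoras:
  "cinner x z = 0 \<longleftrightarrow> (\<forall>c. (norm (x + scaleC c z))\<^sup>2 = (norm x)\<^sup>2 + (cmod c)\<^sup>2 * (norm (z::'a::chilbert))\<^sup>2)"
proof -
  have expand: "(norm (x + scaleC c z))\<^sup>2 = (norm x)\<^sup>2 + (cmod c)\<^sup>2 * (norm z)\<^sup>2 + 2 * Re (c * cinner x z)" for c
    by (simp add: norm_add_square norm_scaleC cinner_scaleC_right power_mult_distrib)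
  show ?thesis
  proof
    assume "cinner x z = 0"
    then show "\<forall>c. (norm (x + scaleC c z))\<^sup>2 = (norm x)\<^sup>2 + (cmod c)\<^sup>2 * (norm z)\<^sup>2"
      by (simp add: expand)
  next
    assume "\<forall>c. (norm (x + scaleC c z))\<^sup>2 = (norm x)\<^sup>2 + (cmod c)\<^sup>2 * (norm z)\<^sup>2"
    from spec[OF this, of "cnj (cinner x z)"] have "Re (cnj (cinner x z) * cinner x z) = 0"
      using expand[of "cnj (cinner x z)"] by linarith
    moreover have "Re (cnj (cinner x z) * cinner x z) = (cmod (cinner x z))\<^sup>2"
      by (metis Re_complex_of_real complex_norm_square mult.commute)
    ultimately show "cinner x z = 0"
      by simp
  qed
qed

lemma shift_wandering_independent_le:
  assumes wandering: "\<forall>i<k. f i \<in> shift_wandering n" and "array_independent k f"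
  shows "enat k \<le> n"
proof (rule ccontr)
  assume "\<not> enat k \<le> n"
  then obtain m where n: "n = enat m" and "m < k"
    by (cases n) auto
  obtain c where nontrivial: "\<exists>i\<in>{..<k}. c i \<noteq> 0" and c: "\<forall>j<m. (\<Sum>i<k. c i * f i 0 j) = 0"
    using homogeneous_system_nontrivial_solution[of "{..<k}" m "\<lambda>i j. f i 0 j"] \<open>m < k\<close> by auto
  have "f i a b = 0" if "i < k" "a \<noteq> 0 \<or> b \<ge> m" for i a b
    using wandering that n by (auto simp: shift_wandering_def ell2n_def)
  then have "(\<Sum>i<k. c i * f i a b) = 0" for a b
    using c by (cases "a = 0 \<and> b < m") auto
  then show False
    using \<open>array_independent k f\<close> nontrivial by (auto simp: array_independent_def)
qed

lemma shift_wandering_independent_exists: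
  assumes "enat k \<le> n"
  shows "\<exists>f. (\<forall>i<k. f i \<in> shift_wandering n) \<and> array_independent k f"
proof (intro exI conjI allI impI)
  define e where "e i a b = (if a = 0 \<and> b = i then 1 else (0::complex))" for i a b :: nat
  show "e i \<in> shift_wandering n" if "i < k" for i
  proof -
    have "ell2_sq (e i) summable_on UNIV"
      by (rule infsum_single_support(1)[of "(0, i)"]) (auto simp: ell2_sq_def e_def split: if_splits)
    moreover have "enat i < n"
      using that assms by (meson enat_ord_simps(2) order_less_le_trans)
    ultimately show ?thesis
      by (auto simp: shift_wandering_def ell2n_def e_def ell2_sq_def)
  qed
  show "array_independent k e"
    unfolding array_independent_def
  proof (intro allI impI)
    fix c i
    assume "\<forall>a b. (\<Sum>i<k. c i * e i a b) = 0" and "i < k"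
    moreover have "(\<Sum>l<k. c l * e l 0 i) = c i"
      using \<open>i < k\<close> by (simp add: e_def if_distrib cong: if_cong)
    ultimately show "c i = 0"
      by metis
  qed
qed

definition csubspace :: "'a::chilbert set \<Rightarrow> bool" where
  "csubspace S \<longleftrightarrow> 0 \<in> S \<and> (\<forall>x\<in>S. \<forall>y\<in>S. x + y \<in> S) \<and> (\<forall>c. \<forall>x\<in>S. scaleC c x \<in> S)"

definition wandering_space :: "('a::chilbert \<Rightarrow> 'a) \<Rightarrow> 'a set \<Rightarrow> 'a set" where
  "wandering_space T S = {x \<in> S. \<forall>y\<in>S. cinner x (T y) = 0}"

definition cindependent :: "nat \<Rightarrow> (nat \<Rightarrow> 'a::chilbert) \<Rightarrow> bool" where
  "cindependent k x \<longleftrightarrow> (\<forall>c. (\<Sum>i<k. scaleC (c i) (x i)) = 0 \<longrightarrow> (\<forall>i<k. c i = 0))"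

definition has_independent_wandering :: "('a::chilbert \<Rightarrow> 'a) \<Rightarrow> 'a set \<Rightarrow> nat \<Rightarrow> bool" where
  "has_independent_wandering T S k \<longleftrightarrow> (\<exists>x. (\<forall>i<k. x i \<in> wandering_space T S) \<and> cindependent k x)"

lemma closed_csubspace_imp_csubspace: "closed_csubspace S \<Longrightarrow> csubspace S"
  by (simp add: csubspace_def closed_csubspace_def)

lemma csubspace_sum:
  fixes k :: nat
  assumes "csubspace S" and "\<forall>i<k. x i \<in> S"
  shows "(\<Sum>i<k. scaleC (c i) (x i)) \<in> S"
  using assms(2) by (induction k) (use assms(1) in \<open>auto simp: csubspace_def\<close>)

lemma cindependent_image:
  assumes "bop J" "inj J" and "cindependent k x"
  shows "cindependent k (\<lambda>i. J (x i))"
  unfolding cindependent_def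
proof (intro allI impI)
  fix c i
  assume "(\<Sum>i<k. scaleC (c i) (J (x i))) = 0" and "i < k"
  then have "J (\<Sum>i<k. scaleC (c i) (x i)) = J 0"
    by (simp add: bop_sum[OF \<open>bop J\<close>] bop_zero[OF \<open>bop J\<close>])
  then have "(\<Sum>i<k. scaleC (c i) (x i)) = 0"
    using \<open>inj J\<close> by (simp add: inj_eq)
  then show "c i = 0"
    using \<open>cindependent k x\<close> \<open>i < k\<close> by (simp add: cindependent_def)
qed

locale shift_model =
  fixes S :: "'a::chilbert set" and T :: "'a \<Rightarrow> 'a" and n :: enat
    and U :: "'a \<Rightarrow> nat \<Rightarrow> nat \<Rightarrow> complex"
  assumes subspace: "csubspace S"
    and T_closed: "\<And>x. x \<in> S \<Longrightarrow> T x \<in> S"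
    and bij: "bij_betw U S (ell2n n)"
    and add: "\<And>x y. x \<in> S \<Longrightarrow> y \<in> S \<Longrightarrow> U (x + y) = (\<lambda>k j. U x k j + U y k j)"
    and scale: "\<And>c x. x \<in> S \<Longrightarrow> U (scaleC c x) = (\<lambda>k j. c * U x k j)"
    and norm: "\<And>x. x \<in> S \<Longrightarrow> (norm x)\<^sup>2 = ell2_norm2 (U x)"
    and shift: "\<And>x. x \<in> S \<Longrightarrow> U (T x) = shift_Mz (U x)"

lemma pure_on_shift_model:
  assumes "pure_on S T n" and "csubspace S"
  obtains U where "shift_model S T n U"
proof -
  obtain U where "bij_betw U S (ell2n n)"
    and "\<forall>x\<in>S. \<forall>y\<in>S. U (x + y) = (\<lambda>k j. U x k j + U y k j)"
    and "\<forall>c. \<forall>x\<in>S. U (scaleC c x) = (\<lambda>k j. c * U x k j)"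
    and "\<forall>x\<in>S. (norm x)\<^sup>2 = (\<Sum>\<^sub>\<infinity>(k, j)\<in>UNIV. (cmod (U x k j))\<^sup>2)"
    and "\<forall>x\<in>S. U (T x) = shift_Mz (U x)"
    using assms(1) unfolding pure_on_def by blast
  then have "shift_model S T n U"
    using assms by (simp add: shift_model_def ell2_norm2_def ell2_sq_def pure_on_def)
  then show ?thesis
    using that by blast
qed

context shift_model
begin

lemma zero_in: "0 \<in> S"
  using subspace by (simp add: csubspace_def)

lemma U_eq_0_iff: "x \<in> S \<Longrightarrow> U x = (\<lambda>k j. 0) \<longleftrightarrow> x = 0"
proof -
  have U0: "U 0 = (\<lambda>k j. 0)"
    using add[OF zero_in zero_in] by (simp add: fun_eq_iff)
  then show "x \<in> S \<Longrightarrow> U x = (\<lambda>k j. 0) \<longleftrightarrow> x = 0"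
    using bij zero_in by (metis bij_betw_imp_inj_on inj_on_contraD)
qed

lemma U_sum:
  fixes k :: nat
  assumes "\<forall>i<k. x i \<in> S"
  shows "U (\<Sum>i<k. scaleC (c i) (x i)) = (\<lambda>a b. \<Sum>i<k. c i * U (x i) a b)"
  using assms
proof (induction k)
  case 0
  then show ?case
    using U_eq_0_iff zero_in by simp
next
  case (Suc k)
  then show ?case
    using csubspace_sum[OF subspace] subspace
    by (simp add: add scale csubspace_def)
qed

lemma cindependent_iff_array_independent:
  assumes "\<forall>i<k. x i \<in> S"
  shows "cindependent k x \<longleftrightarrow> array_independent k (\<lambda>i. U (x i))"
proof -
  have "(\<Sum>i<k. scaleC (c i) (x i)) = 0 \<longleftrightarrow> (\<forall>a b. (\<Sum>i<k. c i * U (x i) a b) = 0)" for c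
    using U_eq_0_iff[OF csubspace_sum[OF subspace assms]] U_sum[OF assms] by (simp add: fun_eq_iff)
  then show ?thesis
    by (simp add: cindependent_def array_independent_def)
qed

lemma fixed_point_eq_0:
  assumes "x \<in> S" "T x = x"
  shows "x = 0"
proof -
  have "U x = shift_Mz (U x)"
    using shift assms by metis
  then have "U x k j = 0" for k j
    by (induction k) (metis shift_Mz_def, metis shift_Mz_def diff_Suc_1 nat.distinct(1))
  then show ?thesis
    using U_eq_0_iff[OF \<open>x \<in> S\<close>] by (simp add: fun_eq_iff)
qed

lemma wandering_space_iff:
  assumes "x \<in> S"
  shows "x \<in> wandering_space T S \<longleftrightarrow> U x \<in> shift_wandering n"
proof -
  have "U x \<in> ell2n n" and onto: "U ` S = ell2n n"
    using bij assms by (auto simp: bij_betw_def)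
  have transport: "(norm (x + scaleC c (T y)))\<^sup>2 = (norm x)\<^sup>2 + (cmod c)\<^sup>2 * (norm (T y))\<^sup>2 \<longleftrightarrow>
      ell2_norm2 (\<lambda>k j. U x k j + c * shift_Mz (U y) k j)
        = ell2_norm2 (U x) + (cmod c)\<^sup>2 * ell2_norm2 (shift_Mz (U y))" if "y \<in> S" for y c
  proof -
    have "T y \<in> S" "scaleC c (T y) \<in> S"
      using T_closed subspace that by (auto simp: csubspace_def)
    then have "x + scaleC c (T y) \<in> S"
      using subspace assms by (simp add: csubspace_def)
    then show ?thesis
      using norm \<open>T y \<in> S\<close> \<open>scaleC c (T y) \<in> S\<close> assms that
      by (simp add: add scale shift)
  qed
  have "x \<in> wandering_space T S \<longleftrightarrow>
      (\<forall>y\<in>S. \<forall>c. (norm (x + scaleC c (T y)))\<^sup>2 = (norm x)\<^sup>2 + (cmod c)\<^sup>2 * (norm (T y))\<^sup>2)"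
    using assms by (simp add: wandering_space_def cinner_eq_0_iff_pythagoras)
  also have "\<dots> \<longleftrightarrow> (\<forall>g\<in>U ` S. \<forall>c. ell2_norm2 (\<lambda>k j. U x k j + c * shift_Mz g k j)
      = ell2_norm2 (U x) + (cmod c)\<^sup>2 * ell2_norm2 (shift_Mz g))"
    using transport by simp
  also have "\<dots> \<longleftrightarrow> U x \<in> shift_wandering n"
    unfolding onto by (rule shift_wandering_iff_pythagoras[OF \<open>U x \<in> ell2n n\<close>, symmetric])
  finally show ?thesis .
qed

lemma has_independent_wandering_iff: "has_independent_wandering T S k \<longleftrightarrow> enat k \<le> n"
proof
  assume "has_independent_wandering T S k"
  then obtain x where wandering: "\<forall>i<k. x i \<in> wandering_space T S" and "cindependent k x"
    by (auto simp: has_independent_wandering_def)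
  then have "\<forall>i<k. x i \<in> S"
    by (simp add: wandering_space_def)
  then show "enat k \<le> n"
    using wandering \<open>cindependent k x\<close>
    by (intro shift_wandering_independent_le[of k "\<lambda>i. U (x i)"])
      (simp_all add: wandering_space_iff cindependent_iff_array_independent)
next
  assume "enat k \<le> n"
  then obtain f where wandering: "\<forall>i<k. f i \<in> shift_wandering n" and "array_independent k f"
    using shift_wandering_independent_exists by blast
  define x where "x i = inv_into S U (f i)" for i
  have "f i \<in> U ` S" if "i < k" for i
    using wandering that bij by (simp add: shift_wandering_def bij_betw_def)
  then have x: "x i \<in> S" "U (x i) = f i" if "i < k" for i
    using that by (simp_all add: x_def inv_into_into f_inv_into_f)
  have "(\<Sum>i<k. c i * U (x i) a b) = (\<Sum>i<k. c i * f i a b)" for c a b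
    by (rule sum.cong) (simp_all add: x)
  then have "array_independent k (\<lambda>i. U (x i))"
    using \<open>array_independent k f\<close> by (simp add: array_independent_def)
  then show "has_independent_wandering T S k"
    unfolding has_independent_wandering_def
    using wandering x by (intro exI[of _ x]) (simp add: wandering_space_iff cindependent_iff_array_independent)
qed

end

section \<open>The Wold decomposition of \<open>J V\<close>\<close>

lemma self_adjoint_invariant_complement:
  assumes sym: "\<And>x y. cinner (P x) y = cinner x (P y)" and invariant: "P ` H1 \<subseteq> H1"
    and orth: "\<And>x y. x \<in> H0 \<Longrightarrow> y \<in> H1 \<Longrightarrow> cinner x y = 0"
    and decomposition: "\<And>z. \<exists>x\<in>H0. \<exists>y\<in>H1. z = x + y" and "x \<in> H0"
  shows "P x \<in> H0"
proof -
  obtain z0 z1 where "z0 \<in> H0" "z1 \<in> H1" and decomp: "P x = z0 + z1"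
    using decomposition by blast
  have "z1 = P x - z0"
    using decomp by simp
  then have "cinner z1 z1 = cinner x (P z1) - cinner z0 z1"
    by (metis cinner_diff_left sym)
  also have "\<dots> = 0"
    using orth \<open>x \<in> H0\<close> \<open>z0 \<in> H0\<close> \<open>z1 \<in> H1\<close> invariant by auto
  finally show ?thesis
    using decomp \<open>z0 \<in> H0\<close> by simp
qed

lemma hankel_preserves_unitary_part:
  assumes wold: "wold_decomp W H0 H1" and "hankel W P" "isometry W"
    and fixed: "\<forall>x\<in>H1. W x = x" and "y \<in> H1"
  shows "P y \<in> H1"
proof -
  have "bop W"
    using \<open>isometry W\<close> by (simp add: isometry_def)
  obtain m where pure: "pure_on H0 W m"
    using wold by (auto simp: wold_decomp_def)
  have orth: "\<And>x y. x \<in> H0 \<Longrightarrow> y \<in> H1 \<Longrightarrow> cinner y x = 0"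
    using wold by (metis wold_decomp_def cinner_commute complex_cnj_zero)
  have "\<exists>z0\<in>H0. \<exists>z1\<in>H1. P y = z0 + z1"
    using wold by (simp add: wold_decomp_def)
  then obtain z0 z1 where "z0 \<in> H0" "z1 \<in> H1" and decomp: "P y = z0 + z1"
    by blast
  \<comment> \<open>the \<open>H0\<close>-component of \<open>P y\<close> is a fixed vector of the pure isometry \<open>W|H0\<close>\<close>
  have "cinner z0 x = cinner z0 (W x)" if "x \<in> H0" for x
  proof -
    have "W x \<in> H0"
      using pure that by (simp add: pure_on_def)
    have "cinner (P y) x = cinner (P y) (W x)"
      using hankel_cinner[OF \<open>hankel W P\<close> \<open>bop W\<close>, of y x] fixed \<open>y \<in> H1\<close> by simp
    then show ?thesis
      using orth[OF that \<open>z1 \<in> H1\<close>] orth[OF \<open>W x \<in> H0\<close> \<open>z1 \<in> H1\<close>]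
      by (simp add: decomp cinner_add_left)
  qed
  from this[OF \<open>z0 \<in> H0\<close>] have "cinner (W z0) z0 = complex_of_real ((norm z0)\<^sup>2)"
    by (metis cinner_commute cinner_self complex_cnj_complex_of_real)
  then have "W z0 = z0"
    using \<open>isometry W\<close> by (intro eq_of_cinner_eq_norm_square) (simp_all add: isometry_def)
  moreover obtain U where "shift_model H0 W m U"
    using pure_on_shift_model[OF pure] wold
    by (auto simp: wold_decomp_def closed_csubspace_imp_csubspace)
  ultimately have "z0 = 0"
    using shift_model.fixed_point_eq_0 \<open>z0 \<in> H0\<close> by blast
  then show ?thesis
    using decomp \<open>z1 \<in> H1\<close> by simp
qed

lemma hankel_doubly_pos_wold_decomp:
  assumes "hankel_doubly_pos W P" "inj P" "isometry W" and wold: "wold_decomp W H0 H1"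
  shows "P ` H0 \<subseteq> H0" and "P ` H1 \<subseteq> H1" and "\<forall>x\<in>H1. W x = x"
proof -
  have "psd P" "hankel W P"
    using assms(1) by (simp_all add: hankel_doubly_pos_def)
  have "W ` H1 = H1"
    using wold by (simp add: wold_decomp_def)
  then show fixed: "\<forall>x\<in>H1. W x = x"
    using hankel_doubly_pos_fixes_unitary_part[OF assms(1-3)] by blast
  show "P ` H1 \<subseteq> H1"
    using hankel_preserves_unitary_part[OF wold \<open>hankel W P\<close> \<open>isometry W\<close> fixed] by blast
  then show "P ` H0 \<subseteq> H0"
    using self_adjoint_invariant_complement[OF psd_cinner_commute[OF \<open>psd P\<close>]] wold
    by (auto simp: wold_decomp_def)
qed

lemma enat_eqI:
  fixes a b :: enat
  assumes "\<And>k. enat k \<le> a \<longleftrightarrow> enat k \<le> b"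
  shows "a = b"
proof (cases a)
  case (enat p)
  then have "enat p \<le> b" "\<not> enat (Suc p) \<le> b"
    using assms[of p] assms[of "Suc p"] by auto
  then show ?thesis
    using enat by (cases b) auto
next
  case infinity
  then have "enat k \<le> b" for k
    using assms by simp
  then show ?thesis
    using infinity by (cases b) (auto, metis Suc_n_not_le_n enat_ord_simps(1))
qed

lemma wold_wandering_space_eq:
  assumes wold: "wold_decomp W H0 H1" and "bop W"
  shows "wandering_space W H0 = {z. \<forall>y. cinner z (W y) = 0}"
proof -
  have orth: "\<And>a b. a \<in> H0 \<Longrightarrow> b \<in> H1 \<Longrightarrow> cinner a b = 0"
    and decomp: "\<And>z. \<exists>a\<in>H0. \<exists>b\<in>H1. z = a + b"
    and H1_onto: "W ` H1 = H1"
    using wold by (simp_all add: wold_decomp_def)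
  show ?thesis
  proof (intro set_eqI iffI CollectI allI)
    fix z y
    assume "z \<in> wandering_space W H0"
    then have "z \<in> H0" and orth0: "\<And>y. y \<in> H0 \<Longrightarrow> cinner z (W y) = 0"
      by (auto simp: wandering_space_def)
    obtain y0 y1 where "y0 \<in> H0" "y1 \<in> H1" and "y = y0 + y1"
      using decomp by blast
    moreover have "W y1 \<in> H1"
      using H1_onto \<open>y1 \<in> H1\<close> by auto
    ultimately show "cinner z (W y) = 0"
      using orth0 orth[OF \<open>z \<in> H0\<close>] by (simp add: bop_add[OF \<open>bop W\<close>] cinner_add_right)
  next
    fix z
    assume "z \<in> {z. \<forall>y. cinner z (W y) = 0}"
    then have orthW: "\<And>y. cinner z (W y) = 0"
      by simp
    obtain a b where "a \<in> H0" "b \<in> H1" and z: "z = a + b"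
      using decomp by blast
    \<comment> \<open>\<open>H1 = W H1\<close> lies in the range of \<open>W\<close>, which is orthogonal to \<open>z\<close>\<close>
    obtain y where "b = W y"
      using H1_onto \<open>b \<in> H1\<close> by blast
    then have "cinner a b + cinner b b = 0"
      using orthW[of y] by (simp add: z cinner_add_left)
    then have "b = 0"
      using orth[OF \<open>a \<in> H0\<close> \<open>b \<in> H1\<close>] by simp
    then show "z \<in> wandering_space W H0"
      using \<open>a \<in> H0\<close> z orthW by (simp add: wandering_space_def)
  qed
qed

lemma twisted_wandering_space_iff:
  assumes "isometry J" "adj J = J" "bop V" and wold: "wold_decomp (J \<circ> V) H0 H1"
  shows "J x \<in> wandering_space (J \<circ> V) H0 \<longleftrightarrow> x \<in> wandering_space V UNIV"
proof -
  have "bop J"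
    using assms(1) by (simp add: isometry_def)
  have "cinner (J x) (J (V y)) = cinner x (V y)" for y
    using self_adjoint_cinner[OF \<open>bop J\<close> \<open>adj J = J\<close>] self_adjoint_isometry_involution[OF assms(1,2)]
    by simp
  then show ?thesis
    using wold_wandering_space_eq[OF wold bop_comp[OF \<open>bop J\<close> \<open>bop V\<close>]]
    by (simp add: wandering_space_def)
qed

lemma has_independent_wandering_twist:
  assumes "isometry J" "adj J = J" "bop V" and wold: "wold_decomp (J \<circ> V) H0 H1"
  shows "has_independent_wandering (J \<circ> V) H0 k \<longleftrightarrow> has_independent_wandering V UNIV k"
proof -
  have "bop J" "inj J"
    using assms(1) by (simp_all add: isometry_def isometry_inj)
  note JJ = self_adjoint_isometry_involution[OF assms(1,2)]
  note twist = twisted_wandering_space_iff[OF assms]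
  show ?thesis
  proof
    assume "has_independent_wandering (J \<circ> V) H0 k"
    then obtain y where "\<forall>i<k. y i \<in> wandering_space (J \<circ> V) H0" and "cindependent k y"
      by (auto simp: has_independent_wandering_def)
    then have "\<forall>i<k. J (y i) \<in> wandering_space V UNIV"
      using twist[of "J (y _)"] JJ by simp
    then show "has_independent_wandering V UNIV k"
      using cindependent_image[OF \<open>bop J\<close> \<open>inj J\<close> \<open>cindependent k y\<close>]
      by (auto simp: has_independent_wandering_def)
  next
    assume "has_independent_wandering V UNIV k"
    then obtain x where "\<forall>i<k. x i \<in> wandering_space V UNIV" and "cindependent k x"
      by (auto simp: has_independent_wandering_def)
    then have "\<forall>i<k. J (x i) \<in> wandering_space (J \<circ> V) H0"
      using twist by simp
    then show "has_independent_wandering (J \<circ> V) H0 k"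
      using cindependent_image[OF \<open>bop J\<close> \<open>inj J\<close> \<open>cindependent k x\<close>]
      by (auto simp: has_independent_wandering_def)
  qed
qed

lemma wold_pure_part_multiplicity:
  assumes "pure_isometry V N" "isometry J" "adj J = J" and wold: "wold_decomp (J \<circ> V) H0 H1"
  shows "pure_on H0 (J \<circ> V) N"
proof -
  have "bop V"
    using assms(1) by (simp add: pure_isometry_def isometry_def)
  obtain m where pure: "pure_on H0 (J \<circ> V) m"
    using wold by (auto simp: wold_decomp_def)
  obtain U where "shift_model H0 (J \<circ> V) m U"
    using pure_on_shift_model[OF pure] wold by (auto simp: wold_decomp_def closed_csubspace_imp_csubspace)
  moreover obtain U' where "shift_model UNIV V N U'"
    using pure_on_shift_model[of UNIV V N] assms(1) by (auto simp: pure_isometry_def csubspace_def)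
  ultimately have "m = N"
    using has_independent_wandering_twist[OF assms(2,3) \<open>bop V\<close> wold]
    by (intro enat_eqI) (metis shift_model.has_independent_wandering_iff)
  then show ?thesis
    using pure by simp
qed

theorem theoremC:
  fixes A V P J :: "'a::chilbert \<Rightarrow> 'a" and N :: enat
  assumes sep: "separable_space TYPE('a)"
    and A_bop: "bop A" and A_sa: "adj A = A" and A_inj: "inj A"
    and V_pure: "pure_isometry V N"
    and A_hankel: "hankel V A"
    and AV_pos: "strictly_pos (A \<circ> V)"
    and P_psd: "psd P" and P_sq: "P \<circ> P = adj A \<circ> A"
    and J_bop: "bop J" and J_sa: "adj J = J" and J_unitary: "unitary_op J"
    and polar: "A = J \<circ> P"
  shows "strictly_pos P \<and> hankel_doubly_pos (J \<circ> V) P \<and>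
    (\<forall>H0 H1. wold_decomp (J \<circ> V) H0 H1 \<longrightarrow>
        pure_on H0 (J \<circ> V) N \<and> P ` H0 \<subseteq> H0 \<and> P ` H1 \<subseteq> H1 \<and>
        ((\<forall>x\<in>H1. (J \<circ> V) x = x) \<or> H1 = {0}))"
proof -
  have "isometry V" "isometry J"
    using V_pure J_unitary by (simp_all add: pure_isometry_def unitary_op_def)
  then have "bop V" and W_iso: "isometry (J \<circ> V)"
    by (simp_all add: isometry_def[of V] isometry_comp)
  have "inj P"
    using A_inj polar inj_on_imageI2 by blast
  have doubly_pos: "hankel_doubly_pos (J \<circ> V) P"
    using polar_factor_hankel_doubly_pos[OF A_bop A_sa P_psd J_bop J_sa polar \<open>bop V\<close> A_hankel] AV_pos
    by (simp add: strictly_pos_def)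
  have "pure_on H0 (J \<circ> V) N \<and> P ` H0 \<subseteq> H0 \<and> P ` H1 \<subseteq> H1 \<and> (\<forall>x\<in>H1. (J \<circ> V) x = x)"
    if wold: "wold_decomp (J \<circ> V) H0 H1" for H0 H1
    using hankel_doubly_pos_wold_decomp[OF doubly_pos \<open>inj P\<close> W_iso wold]
      wold_pure_part_multiplicity[OF V_pure \<open>isometry J\<close> J_sa wold] by blast
  then show ?thesis
    using P_psd \<open>inj P\<close> doubly_pos by (simp add: strictly_pos_def)
qed

end
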